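(* Let $m>1$ be an integer and $k>1$ an odd integer. Then there exists a number $c$ such that for every integer base $b\ge c$, the number $[m\cdot(b-1)]^k$ is antipalindromic in base $b$. Moreover, one may take $c=\binom{k}{\frac{k-1}{2}}\cdot m^k$.
   Context: For an integer $b\ge 2$, every natural number $x$ has a unique base-$b$ expansion $x=a_\ell b^\ell+\dots+a_1b+a_0$ with $a_0,\dots,a_\ell\in\{0,1,\dots,b-1\}$ and $a_\ell\neq 0$. The number $x$ is antipalindromic in base $b$ if $a_j=b-1-a_{\ell-j}$ for all $j\in\{0,1,\dots,\ell\}$. *)

theory Defs
  imports Main
begin

fun digits :: "nat \<Rightarrow> nat \<Rightarrow> nat list" where
  "digits b x = (if b < 2 \<or> x = 0 then [] else (x mod b) # digits b (x div b))"

declare digits.simps [simp del]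

definition antipalindromic :: "nat \<Rightarrow> nat \<Rightarrow> bool" where
  "antipalindromic b x \<longleftrightarrow>
     (let ds = digits b x; l = length ds - 1 in
      \<forall>j \<le> l. ds ! j = b - 1 - ds ! (l - j))"

end

theory Submission
  imports Defs "HOL.Binomial_Plus"
begin

(* Expanding M (b - 1)^k by the binomial theorem gives the terms M (k choose i) b^i with sign
   (-1)^(k - i), negative exactly for even i since k is odd. Borrowing b^(i + 1) for each negative
   term yields the digits b - M (k choose i) at even and M (k choose i) - 1 at odd positions, which
   are genuine base-b digits as soon as b is at least M times the central binomial coefficient.
   Positions i and k - i have opposite parity and equal binomial coefficients, so their digits
   add up to b - 1. *)

fun from_digits :: "nat \<Rightarrow> nat list \<Rightarrow> nat" where
  "from_digits b [] = 0"
| "from_digits b (d # ds) = d + b * from_digits b ds"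

lemma from_digits_eq_sum: "from_digits b ds = (\<Sum>i<length ds. ds ! i * b ^ i)"
proof (induction ds)
  case (Cons d ds)
  have "(\<Sum>i<length (d # ds). (d # ds) ! i * b ^ i) = d + (\<Sum>i<length ds. ds ! i * b ^ Suc i)"
    by (simp only: length_Cons sum.lessThan_Suc_shift) simp
  also have "\<dots> = d + b * (\<Sum>i<length ds. ds ! i * b ^ i)"
    by (simp add: sum_distrib_left algebra_simps)
  finally show ?case using Cons by simp
qed simp

lemma from_digits_eq_0_iff: "b > 0 \<Longrightarrow> from_digits b ds = 0 \<longleftrightarrow> (\<forall>d\<in>set ds. d = 0)"
  by (induction ds) auto

lemma digits_from_digits:
  assumes "b \<ge> 2" "\<forall>d\<in>set ds. d < b" "ds = [] \<or> last ds \<noteq> 0"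
  shows "digits b (from_digits b ds) = ds"
  using assms(2,3)
proof (induction ds)
  case Nil
  then show ?case by (simp add: digits.simps)
next
  case (Cons d ds)
  have "from_digits b (d # ds) \<noteq> 0"
    using Cons.prems assms(1) from_digits_eq_0_iff[of b "d # ds"] by (auto split: if_splits)
  moreover have "digits b (from_digits b ds) = ds"
    using Cons by (auto split: if_splits)
  ultimately show ?case
    using Cons.prems assms(1) by (subst digits.simps) auto
qed

lemma antipalindromic_from_digits:
  assumes "b \<ge> 2" "\<forall>d\<in>set ds. d < b" "ds \<noteq> []" "last ds \<noteq> 0"
    and complement: "\<And>j. j < length ds \<Longrightarrow> ds ! j + ds ! (length ds - 1 - j) = b - 1"
  shows "antipalindromic b (from_digits b ds)"
proof -
  have digits_eq: "digits b (from_digits b ds) = ds"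
    using digits_from_digits assms(1,2,4) by blast
  have "ds ! j = b - 1 - ds ! (length ds - 1 - j)" if "j \<le> length ds - 1" for j
  proof -
    from that assms(3) have "j < length ds" by (cases ds) auto
    then show ?thesis using complement[of j] by simp
  qed
  then show ?thesis unfolding antipalindromic_def Let_def digits_eq by blast
qed

lemma sum_alternating_telescope:
  fixes B :: "'a::comm_ring_1"
  shows "(\<Sum>i<2 * n. if even i then B ^ Suc i else - (B ^ i)) = 0"
  by (induction n) auto

lemma odd_power_pred_expansion:
  fixes B M :: "'a::comm_ring_1"
  assumes "odd k"
  shows "(\<Sum>i\<le>k. (if even i then B - M * of_nat (k choose i) else M * of_nat (k choose i) - 1)
            * B ^ i) = M * (B - 1) ^ k"
proof -
  have term_split: "(if even i then B - M * of_nat (k choose i) else M * of_nat (k choose i) - 1) * B ^ i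
      = M * (of_nat (k choose i) * B ^ i * (- 1) ^ (k - i))
        + (if even i then B ^ Suc i else - (B ^ i))" if "i \<le> k" for i
    using assms that by (cases "even i") (auto simp: algebra_simps)
  have "(\<Sum>i\<le>k. if even i then B ^ Suc i else - (B ^ i)) = 0"
  proof -
    have "{..k} = {..<2 * ((k + 1) div 2)}" using assms by (auto elim!: oddE)
    then show ?thesis using sum_alternating_telescope by simp
  qed
  then have "(\<Sum>i\<le>k. (if even i then B - M * of_nat (k choose i) else M * of_nat (k choose i) - 1)
              * B ^ i) = M * (\<Sum>i\<le>k. of_nat (k choose i) * B ^ i * (- 1) ^ (k - i))"
    by (simp add: term_split sum.distrib sum_distrib_left)
  also have "\<dots> = M * (B - 1) ^ k"
    using binomial_ring[of B "- 1" k] by simp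
  finally show ?thesis .
qed

definition pred_power_digit :: "nat \<Rightarrow> nat \<Rightarrow> nat \<Rightarrow> nat \<Rightarrow> nat" where
  "pred_power_digit b M k i = (if even i then b - M * (k choose i) else M * (k choose i) - 1)"

lemma from_digits_pred_power_digits:
  assumes "odd k" and coeff_bounds: "\<And>i. i \<le> k \<Longrightarrow> 1 \<le> M * (k choose i) \<and> M * (k choose i) \<le> b"
  shows "from_digits b (map (pred_power_digit b M k) [0..<Suc k]) = M * (b - 1) ^ k"
proof -
  have digit_int: "int (pred_power_digit b M k i)
      = (if even i then int b - int M * int (k choose i) else int M * int (k choose i) - 1)"
    if "i \<le> k" for i
    using coeff_bounds[OF that] by (simp add: pred_power_digit_def of_nat_diff)
  have "b \<ge> 1" using coeff_bounds[of 0] by simp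
  have "int (from_digits b (map (pred_power_digit b M k) [0..<Suc k]))
        = (\<Sum>i\<le>k. int (pred_power_digit b M k i) * int b ^ i)"
    by (simp del: upt_Suc add: from_digits_eq_sum lessThan_Suc_atMost)
  also have "\<dots> = int M * (int b - 1) ^ k"
    using odd_power_pred_expansion[OF assms(1), of "int b" "int M"] by (simp add: digit_int)
  also have "\<dots> = int (M * (b - 1) ^ k)"
    using \<open>b \<ge> 1\<close> by (simp add: of_nat_diff)
  finally show ?thesis by (simp only: of_nat_eq_iff)
qed

lemma antipalindromic_mult_pred_power:
  assumes "odd k" "M \<ge> 2" "M * (k choose (k div 2)) \<le> b"
  shows "antipalindromic b (M * (b - 1) ^ k)"
proof -
  have coeff_bounds: "1 \<le> M * (k choose i) \<and> M * (k choose i) \<le> b" if "i \<le> k" for i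
  proof
    show "1 \<le> M * (k choose i)" using assms(2) that by (simp add: Suc_le_eq)
    have "M * (k choose i) \<le> M * (k choose (k div 2))" by (simp add: binomial_maximum)
    then show "M * (k choose i) \<le> b" using assms(3) by linarith
  qed
  define ds where "ds = map (pred_power_digit b M k) [0..<Suc k]"
  have len: "length ds = Suc k" and nth: "\<And>i. i \<le> k \<Longrightarrow> ds ! i = pred_power_digit b M k i"
    unfolding ds_def by (simp_all del: upt_Suc add: less_Suc_eq_le)
  have "b \<ge> 2" using coeff_bounds[of 0] assms(2) by simp
  moreover have "\<forall>d\<in>set ds. d < b"
  proof
    fix d assume "d \<in> set ds"
    then obtain i where "i \<le> k" "d = pred_power_digit b M k i"
      unfolding ds_def by (auto simp del: upt_Suc simp: less_Suc_eq_le)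
    moreover have "b - M * (k choose i) < b" "M * (k choose i) - 1 < b"
      using coeff_bounds[OF \<open>i \<le> k\<close>] by linarith+
    ultimately show "d < b" by (simp add: pred_power_digit_def)
  qed
  moreover have "ds \<noteq> []" using len by auto
  moreover have "last ds \<noteq> 0"
  proof -
    have "last ds = ds ! k" using len last_conv_nth[of ds] by fastforce
    then show ?thesis using assms(1,2) nth[of k] by (simp add: pred_power_digit_def)
  qed
  moreover have "ds ! j + ds ! (length ds - 1 - j) = b - 1" if "j < length ds" for j
  proof -
    have "j \<le> k" "(k choose (k - j)) = (k choose j)" "even j \<longleftrightarrow> odd (k - j)"
      using that len assms(1) binomial_symmetric[of j k] by auto
    then show ?thesis
      using coeff_bounds[of j] len nth[of j] nth[of "k - j"]
      by (auto simp: pred_power_digit_def)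
  qed
  moreover have "from_digits b ds = M * (b - 1) ^ k"
    unfolding ds_def using from_digits_pred_power_digits[OF assms(1) coeff_bounds] by simp
  ultimately show ?thesis
    using antipalindromic_from_digits[of b ds] by simp
qed

theorem mainTheorem12:
  fixes m k :: nat
  assumes "m > 1" and "k > 1" and "odd k"
  shows "(\<exists>c::nat. \<forall>b::nat. b \<ge> 2 \<longrightarrow> b \<ge> c \<longrightarrow> antipalindromic b ((m * (b - 1)) ^ k))
       \<and> (\<forall>b::nat. b \<ge> 2 \<longrightarrow> b \<ge> (k choose ((k - 1) div 2)) * m ^ k
            \<longrightarrow> antipalindromic b ((m * (b - 1)) ^ k))"
proof -
  have "m ^ k \<ge> 2"
    using assms(1,2) by (metis Suc_1 Suc_leI less_trans one_less_power zero_less_one)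
  moreover have "(k - 1) div 2 = k div 2" using assms(3) by presburger
  ultimately have "antipalindromic b ((m * (b - 1)) ^ k)"
    if "b \<ge> (k choose ((k - 1) div 2)) * m ^ k" for b
    using antipalindromic_mult_pred_power[OF assms(3), of "m ^ k" b] that
    by (simp add: power_mult_distrib mult.commute)
  then show ?thesis by blast
qed

end
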